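(* Let $t$ be a positive integer and $G$ a complete multipartite graph. Consider the following greedy procedure: while uncolored vertices remain, let $H$ be the subgraph induced by the uncolored vertices (itself a complete multipartite graph); if the largest part of $H$ has at least $2t$ vertices, let $W$ be that entire part, otherwise let $W$ be a maximum $t$-sparse set of $H$; assign a new color to all vertices of $W$. Then the resulting coloring is a $t$-relaxed coloring of $G$ using at most $2\chi_t(G)$ colors.
   Context: A set $S\subseteq V(G)$ is $t$-sparse if the induced subgraph $G[S]$ has maximum degree at most $t$. A map $f$ from $V(G)$ to a finite set of colors is a $t$-relaxed coloring if every vertex $u$ has at most $t$ neighbors $v$ with $f(v)=f(u)$; $\chi_t(G)$ is the minimum number of colors in a $t$-relaxed coloring of $G$. *)

theory Defs
  imports Main "HOL-Library.Disjoint_Sets"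
begin

text \<open>Graphs: a finite vertex set V with adjacency relation E (only pairs in V matter).\<close>

definition complete_multipartite :: "'a set \<Rightarrow> ('a \<Rightarrow> 'a \<Rightarrow> bool) \<Rightarrow> bool" where
  "complete_multipartite V E \<longleftrightarrow> finite V \<and>
     (\<exists>P. partition_on V P \<and>
        (\<forall>u\<in>V. \<forall>v\<in>V. E u v \<longleftrightarrow> \<not> (\<exists>p\<in>P. u \<in> p \<and> v \<in> p)))"

definition t_sparse :: "nat \<Rightarrow> ('a \<Rightarrow> 'a \<Rightarrow> bool) \<Rightarrow> 'a set \<Rightarrow> bool" where
  "t_sparse t E S \<longleftrightarrow> (\<forall>u\<in>S. card {v\<in>S. E u v} \<le> t)"

definition relaxed_coloring :: "nat \<Rightarrow> 'a set \<Rightarrow> ('a \<Rightarrow> 'a \<Rightarrow> bool) \<Rightarrow> ('a \<Rightarrow> 'c) \<Rightarrow> bool" where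
  "relaxed_coloring t V E f \<longleftrightarrow> (\<forall>u\<in>V. card {v\<in>V. E u v \<and> f v = f u} \<le> t)"

definition chi_t :: "nat \<Rightarrow> 'a set \<Rightarrow> ('a \<Rightarrow> 'a \<Rightarrow> bool) \<Rightarrow> nat" where
  "chi_t t V E = (LEAST k. \<exists>f :: 'a \<Rightarrow> nat. f ` V \<subseteq> {..<k} \<and> relaxed_coloring t V E f)"

definition part_of :: "'a set \<Rightarrow> ('a \<Rightarrow> 'a \<Rightarrow> bool) \<Rightarrow> 'a set \<Rightarrow> bool" where
  "part_of U E W \<longleftrightarrow> (\<exists>u\<in>U. W = {v\<in>U. v = u \<or> \<not> E u v})"

definition greedy_step :: "nat \<Rightarrow> ('a \<Rightarrow> 'a \<Rightarrow> bool) \<Rightarrow> 'a set \<Rightarrow> 'a set \<Rightarrow> bool" where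
  "greedy_step t E U W \<longleftrightarrow>
     (if (\<exists>Q. part_of U E Q \<and> card Q \<ge> 2 * t)
      then part_of U E W \<and> (\<forall>Q. part_of U E Q \<longrightarrow> card Q \<le> card W)
      else W \<subseteq> U \<and> t_sparse t E W \<and>
           (\<forall>S. S \<subseteq> U \<and> t_sparse t E S \<longrightarrow> card S \<le> card W))"

definition greedy_run :: "nat \<Rightarrow> 'a set \<Rightarrow> ('a \<Rightarrow> 'a \<Rightarrow> bool) \<Rightarrow> 'a set list \<Rightarrow> bool" where
  "greedy_run t V E Ws \<longleftrightarrow>
     (\<forall>i < length Ws. V - \<Union>(set (take i Ws)) \<noteq> {} \<and>
                       greedy_step t E (V - \<Union>(set (take i Ws))) (Ws ! i)) \<and>
     \<Union>(set Ws) = V"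

definition run_coloring :: "'a set list \<Rightarrow> 'a \<Rightarrow> nat" where
  "run_coloring Ws v = (LEAST i. i < length Ws \<and> v \<in> Ws ! i)"

end

(* Weight every vertex v by 2t / max(2t, |P|), where P is the part of v. A t-sparse set either
   lies inside one part or has at most 2t vertices, so its weight is at most 2t, and V has weight
   at most 2t chi_t. The procedure never splits a part of size at least 2t: a round that takes a
   part therefore takes such a part entirely and has weight exactly 2t, while in any other round
   all uncoloured vertices have weight 1, and, except in the last round, at least t + 1 of them
   are coloured, as any t + 1 vertices form a t-sparse set. Comparing the two bounds on the weight
   of V gives at most 2 chi_t rounds. *)
theory Submission
  imports Defs Complex_Main
begin

definition part_at :: "'a set \<Rightarrow> ('a \<Rightarrow> 'a \<Rightarrow> bool) \<Rightarrow> 'a \<Rightarrow> 'a set" where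
  "part_at U E u = {v \<in> U. v = u \<or> \<not> E u v}"

lemma part_of_iff_part_at: "part_of U E W \<longleftrightarrow> (\<exists>u\<in>U. W = part_at U E u)"
  unfolding part_of_def part_at_def ..

lemma relaxed_coloring_class_t_sparse:
  assumes "relaxed_coloring t V E f"
  shows "t_sparse t E {v \<in> V. f v = a}"
  unfolding t_sparse_def
proof
  fix u assume u: "u \<in> {v \<in> V. f v = a}"
  then have "{v \<in> {v \<in> V. f v = a}. E u v} = {v \<in> V. E u v \<and> f v = f u}" by auto
  then show "card {v \<in> {v \<in> V. f v = a}. E u v} \<le> t"
    using assms u unfolding relaxed_coloring_def by auto
qed

lemma sum_le_colors_mult:
  fixes w :: "'a \<Rightarrow> real" and f :: "'a \<Rightarrow> nat"
  assumes "finite V" and "relaxed_coloring t V E f" and "f ` V \<subseteq> {..<k}"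
    and "\<And>S. S \<subseteq> V \<Longrightarrow> t_sparse t E S \<Longrightarrow> sum w S \<le> c"
  shows "sum w V \<le> k * c"
proof -
  have "sum w V = (\<Sum>a<k. sum w {v \<in> V. f v = a})"
    using sum.group[OF assms(1) finite_lessThan assms(3), of w] by simp
  also have "\<dots> \<le> (\<Sum>a<k. c)"
    by (intro sum_mono assms(4) relaxed_coloring_class_t_sparse[OF assms(2)]) auto
  finally show ?thesis by simp
qed

lemma chi_t_coloring_exists:
  fixes f :: "'a \<Rightarrow> nat"
  assumes "relaxed_coloring t V E f" and "f ` V \<subseteq> {..<k}"
  shows "\<exists>g :: 'a \<Rightarrow> nat. g ` V \<subseteq> {..<chi_t t V E} \<and> relaxed_coloring t V E g"
  unfolding chi_t_def by (rule LeastI_ex) (use assms in blast)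

lemma rounds_count_arith:
  fixes t a b c s :: nat
  assumes "1 \<le> t" and "2 * t * a + s \<le> 2 * t * c" and "(t + 1) * b \<le> s + t"
  shows "a + b \<le> 2 * c"
proof -
  have key: "t * (2 * a + b) + b \<le> t * (2 * c + 1)"
    using assms(2,3) by (simp add: algebra_simps)
  then have "t * (2 * a + b) \<le> t * (2 * c + 1)" by linarith
  then have "2 * a + b \<le> 2 * c + 1"
    using assms(1) nat_mult_le_cancel1[of t "2 * a + b" "2 * c + 1"] by linarith
  moreover have "2 * a + b \<noteq> 2 * c + 1"
  proof
    assume "2 * a + b = 2 * c + 1"
    with key have "b = 0" by simp
    with \<open>2 * a + b = 2 * c + 1\<close> show False by presburger
  qed
  ultimately show ?thesis by simp
qed

locale complete_multipartite_graph =
  fixes V :: "'a set" and E :: "'a \<Rightarrow> 'a \<Rightarrow> bool"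
  assumes complete_multipartite: "complete_multipartite V E"
begin

lemma finite_V: "finite V"
  using complete_multipartite unfolding complete_multipartite_def by blast

lemma not_adj_self:
  assumes "u \<in> V"
  shows "\<not> E u u"
proof -
  obtain P where P: "partition_on V P"
    and adj: "\<forall>u\<in>V. \<forall>v\<in>V. E u v \<longleftrightarrow> \<not> (\<exists>p\<in>P. u \<in> p \<and> v \<in> p)"
    using complete_multipartite unfolding complete_multipartite_def by blast
  have "E u u \<longleftrightarrow> \<not> (\<exists>p\<in>P. u \<in> p)" using adj assms by simp
  then show ?thesis using P assms unfolding partition_on_def by blast
qed

lemma adj_sym:
  assumes "u \<in> V" and "v \<in> V"
  shows "E u v \<longleftrightarrow> E v u"
proof -
  obtain P where P: "partition_on V P"
    and adj: "\<forall>u\<in>V. \<forall>v\<in>V. E u v \<longleftrightarrow> \<not> (\<exists>p\<in>P. u \<in> p \<and> v \<in> p)"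
    using complete_multipartite unfolding complete_multipartite_def by blast
  have "E u v \<longleftrightarrow> \<not> (\<exists>p\<in>P. u \<in> p \<and> v \<in> p)"
    and "E v u \<longleftrightarrow> \<not> (\<exists>p\<in>P. v \<in> p \<and> u \<in> p)"
    using adj assms by simp_all
  then show ?thesis by blast
qed

lemma not_adj_trans:
  assumes "u \<in> V" "v \<in> V" "x \<in> V" "\<not> E u v" "\<not> E v x"
  shows "\<not> E u x"
proof -
  obtain P where P: "partition_on V P"
    and adj: "\<forall>u\<in>V. \<forall>v\<in>V. E u v \<longleftrightarrow> \<not> (\<exists>p\<in>P. u \<in> p \<and> v \<in> p)"
    using complete_multipartite unfolding complete_multipartite_def by blast
  obtain p where p: "p \<in> P" "u \<in> p" "v \<in> p" using adj assms by auto
  obtain q where q: "q \<in> P" "v \<in> q" "x \<in> q" using adj assms by auto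
  have "p = q" using disjointD[OF partition_onD2[OF P] p(1) q(1)] p q by blast
  then show ?thesis using adj assms p q by auto
qed

abbreviation part :: "'a \<Rightarrow> 'a set" where
  "part \<equiv> part_at V E"

lemma part_eq: "u \<in> V \<Longrightarrow> part u = {v \<in> V. \<not> E u v}"
  unfolding part_at_def using not_adj_self by auto

lemma part_subset: "part u \<subseteq> V"
  unfolding part_at_def by auto

lemma self_in_part: "u \<in> V \<Longrightarrow> u \<in> part u"
  unfolding part_at_def by auto

lemma finite_part: "finite (part u)"
  using finite_V part_subset by (rule finite_subset[rotated])

lemma card_part_pos: "u \<in> V \<Longrightarrow> 0 < card (part u)"
  using finite_part self_in_part card_gt_0_iff by blast

lemma part_eq_if_mem:
  assumes u: "u \<in> V" and v: "v \<in> part u"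
  shows "part v = part u"
proof -
  have vV: "v \<in> V" and "\<not> E u v" using u v part_eq by auto
  moreover have "\<not> E v u" using \<open>\<not> E u v\<close> adj_sym u vV by blast
  ultimately have "{x \<in> V. \<not> E v x} = {x \<in> V. \<not> E u x}"
    using u not_adj_trans[OF vV u] not_adj_trans[OF u vV] by blast
  then show ?thesis using part_eq u vV by simp
qed

lemma parts_eq_or_disjoint:
  assumes "u \<in> V" and "v \<in> V"
  shows "part u = part v \<or> part u \<inter> part v = {}"
proof (rule disjCI)
  assume "part u \<inter> part v \<noteq> {}"
  then obtain x where "x \<in> part u" "x \<in> part v" by blast
  then show "part u = part v" using part_eq_if_mem assms by metis
qed

lemma part_at_subset_eq: "U \<subseteq> V \<Longrightarrow> part_at U E u = part u \<inter> U"
  unfolding part_at_def by auto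

lemma small_t_sparse:
  assumes "S \<subseteq> V" and "finite S" and "card S \<le> t + 1"
  shows "t_sparse t E S"
  unfolding t_sparse_def
proof
  fix u assume u: "u \<in> S"
  have "{v \<in> S. E u v} \<subseteq> S - {u}" using not_adj_self assms(1) by auto
  then have "card {v \<in> S. E u v} \<le> card (S - {u})" using assms(2) by (intro card_mono) auto
  also have "\<dots> = card S - 1" using assms(2) u by simp
  finally show "card {v \<in> S. E u v} \<le> t" using assms(3) by linarith
qed

text \<open>If two vertices of a t-sparse set are adjacent, every vertex of the set is adjacent to
  one of them, since non-adjacency is transitive.\<close>
lemma t_sparse_within_part_or_card_le:
  assumes S: "S \<subseteq> V" and sparse: "t_sparse t E S"
  shows "(\<exists>u\<in>V. S \<subseteq> part u) \<or> card S \<le> 2 * t"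
proof (cases "\<exists>a\<in>S. \<exists>b\<in>S. E a b")
  case True
  then obtain a b where ab: "a \<in> S" "b \<in> S" "E a b" by blast
  have "S \<subseteq> {v \<in> S. E a v} \<union> {v \<in> S. E b v}"
    using ab S adj_sym not_adj_trans by blast
  then have "card S \<le> card ({v \<in> S. E a v} \<union> {v \<in> S. E b v})"
    using finite_V S by (intro card_mono) (auto intro: finite_subset)
  also have "\<dots> \<le> card {v \<in> S. E a v} + card {v \<in> S. E b v}" by (rule card_Un_le)
  also have "\<dots> \<le> t + t" using sparse ab unfolding t_sparse_def by (simp add: add_mono)
  finally show ?thesis by simp
next
  case False
  show ?thesis
  proof (cases "S = {}")
    case False
    then obtain a where "a \<in> S" by blast
    with \<open>\<not> (\<exists>a\<in>S. \<exists>b\<in>S. E a b)\<close> have "S \<subseteq> part a"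
      using S unfolding part_at_def by auto
    then show ?thesis using \<open>a \<in> S\<close> S by blast
  qed simp
qed

definition weight :: "nat \<Rightarrow> 'a \<Rightarrow> real" where
  "weight t v = real (2 * t) / real (max (2 * t) (card (part v)))"

lemma weight_le_1:
  assumes "v \<in> V"
  shows "weight t v \<le> 1"
proof -
  have "0 < max (2 * t) (card (part v))" using card_part_pos[OF assms] by simp
  then show ?thesis unfolding weight_def by simp
qed

lemma weight_small_part:
  assumes "1 \<le> t" and "card (part v) \<le> 2 * t"
  shows "weight t v = 1"
proof -
  have "max (2 * t) (card (part v)) = 2 * t" using assms(2) by (rule max_absorb1)
  then show ?thesis using assms(1) unfolding weight_def by simp
qed

lemma sum_weight_part:
  assumes "u \<in> V" and "S \<subseteq> part u"
  shows "sum (weight t) S = real (card S) * weight t u"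
proof -
  have "weight t v = weight t u" if "v \<in> S" for v
    using assms that part_eq_if_mem unfolding weight_def by auto
  then show ?thesis by simp
qed

lemma sum_weight_big_part:
  assumes "u \<in> V" and "2 * t \<le> card (part u)"
  shows "sum (weight t) (part u) = real (2 * t)"
  using sum_weight_part[OF assms(1) order_refl] assms card_part_pos[OF assms(1)]
  unfolding weight_def by (simp add: max_def)

lemma sum_weight_t_sparse_le:
  assumes "S \<subseteq> V" and "t_sparse t E S"
  shows "sum (weight t) S \<le> real (2 * t)"
  using t_sparse_within_part_or_card_le[OF assms]
proof
  assume "\<exists>u\<in>V. S \<subseteq> part u"
  then obtain u where u: "u \<in> V" "S \<subseteq> part u" by blast
  define M where "M = max (2 * t) (card (part u))"
  have "card S \<le> card (part u)" using u finite_part card_mono by blast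
  then have "real (card S) * weight t u \<le> real M * weight t u"
    unfolding M_def by (intro mult_right_mono) (auto simp: weight_def)
  also have "\<dots> = real (2 * t)"
    using card_part_pos[OF u(1)] unfolding weight_def M_def by simp
  finally show ?thesis using sum_weight_part[OF u] by simp
next
  assume "card S \<le> 2 * t"
  have "sum (weight t) S \<le> (\<Sum>v\<in>S. 1)"
    using assms(1) weight_le_1 by (intro sum_mono) auto
  then show ?thesis using \<open>card S \<le> 2 * t\<close> by simp
qed

lemma sum_weight_le_chi_t:
  fixes f :: "'a \<Rightarrow> nat"
  assumes "relaxed_coloring t V E f" and "f ` V \<subseteq> {..<k}"
  shows "sum (weight t) V \<le> real (2 * t) * real (chi_t t V E)"
proof -
  obtain g :: "'a \<Rightarrow> nat" where "g ` V \<subseteq> {..<chi_t t V E}" "relaxed_coloring t V E g"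
    using chi_t_coloring_exists[OF assms] by blast
  from sum_le_colors_mult[OF finite_V this(2,1) sum_weight_t_sparse_le]
  show ?thesis by (simp add: mult.commute)
qed

end

locale greedy_coloring_run = complete_multipartite_graph V E
  for V :: "'a set" and E :: "'a \<Rightarrow> 'a \<Rightarrow> bool" +
  fixes t :: nat and Ws :: "'a set list"
  assumes t_pos: "1 \<le> t" and run: "greedy_run t V E Ws"
begin

definition uncolored :: "nat \<Rightarrow> 'a set" where
  "uncolored i = V - \<Union>(set (take i Ws))"

lemma uncolored_subset: "uncolored i \<subseteq> V"
  unfolding uncolored_def by auto

lemma uncolored_0: "uncolored 0 = V"
  unfolding uncolored_def by simp

lemma uncolored_Suc: "i < length Ws \<Longrightarrow> uncolored (Suc i) = uncolored i - Ws ! i"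
  unfolding uncolored_def by (auto simp: take_Suc_conv_app_nth)

lemma uncolored_antimono: "i \<le> j \<Longrightarrow> uncolored j \<subseteq> uncolored i"
  unfolding uncolored_def using set_take_subset_set_take[of i j Ws] by auto

lemma round:
  assumes "i < length Ws"
  shows "uncolored i \<noteq> {}" and "greedy_step t E (uncolored i) (Ws ! i)"
  using run assms unfolding greedy_run_def uncolored_def by blast+

lemma V_eq_UN_classes: "V = (\<Union>i<length Ws. Ws ! i)"
  using run unfolding greedy_run_def by (auto simp: set_conv_nth)

lemma in_some_class:
  assumes "v \<in> V"
  shows "\<exists>i<length Ws. v \<in> Ws ! i"
proof -
  have "v \<in> (\<Union>i<length Ws. Ws ! i)" using assms by (simp only: V_eq_UN_classes[symmetric])
  then show ?thesis by auto
qed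

definition takes_part :: "nat \<Rightarrow> bool" where
  "takes_part i \<longleftrightarrow> (\<exists>Q. part_of (uncolored i) E Q \<and> 2 * t \<le> card Q)"

lemma takes_part_round:
  assumes "i < length Ws" and "takes_part i"
  shows "\<exists>u\<in>uncolored i. Ws ! i = part_at (uncolored i) E u"
    and "\<And>Q. part_of (uncolored i) E Q \<Longrightarrow> card Q \<le> card (Ws ! i)"
  using round(2)[OF assms(1)] assms(2)
  unfolding greedy_step_def takes_part_def part_of_iff_part_at by auto

lemma sparse_round:
  assumes "i < length Ws" and "\<not> takes_part i"
  shows "Ws ! i \<subseteq> uncolored i" and "t_sparse t E (Ws ! i)"
    and "\<And>S. S \<subseteq> uncolored i \<Longrightarrow> t_sparse t E S \<Longrightarrow> card S \<le> card (Ws ! i)"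
  using round(2)[OF assms(1)] assms(2) unfolding greedy_step_def takes_part_def by auto

lemma class_subset_uncolored: "i < length Ws \<Longrightarrow> Ws ! i \<subseteq> uncolored i"
  using takes_part_round(1) sparse_round(1) unfolding part_at_def by blast

lemma finite_class: "i < length Ws \<Longrightarrow> finite (Ws ! i)"
  using class_subset_uncolored uncolored_subset finite_V by (meson finite_subset)

lemma classes_disjoint:
  assumes "i < j" and "j < length Ws"
  shows "Ws ! i \<inter> Ws ! j = {}"
proof -
  have "Ws ! j \<subseteq> uncolored j" using assms(2) by (rule class_subset_uncolored)
  also have "\<dots> \<subseteq> uncolored (Suc i)" using assms(1) by (intro uncolored_antimono) simp
  also have "\<dots> = uncolored i - Ws ! i" using assms by (intro uncolored_Suc) simp
  finally show ?thesis by blast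
qed

lemma run_coloring_eq:
  assumes "i < length Ws" and "v \<in> Ws ! i"
  shows "run_coloring Ws v = i"
  unfolding run_coloring_def
proof (rule Least_equality)
  show "i < length Ws \<and> v \<in> Ws ! i" using assms by blast
  show "i \<le> j" if "j < length Ws \<and> v \<in> Ws ! j" for j
    using that assms classes_disjoint[of j i] by (meson disjoint_iff not_le)
qed

lemma run_coloring_range: "run_coloring Ws ` V \<subseteq> {..<length Ws}"
  using in_some_class run_coloring_eq by fastforce

lemma class_t_sparse:
  assumes "i < length Ws"
  shows "t_sparse t E (Ws ! i)"
proof (cases "takes_part i")
  case True
  then obtain u where u: "u \<in> uncolored i" "Ws ! i = part_at (uncolored i) E u"
    using takes_part_round(1)[OF assms] by blast
  then have sub: "Ws ! i \<subseteq> part u"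
    using part_at_subset_eq[OF uncolored_subset] by auto
  have uV: "u \<in> V" using u(1) uncolored_subset by blast
  have no_edges: "{y \<in> Ws ! i. E x y} = {}" if x: "x \<in> Ws ! i" for x
  proof -
    have xu: "x \<in> part u" using x sub by blast
    have xV: "x \<in> V" using xu part_subset by blast
    have "Ws ! i \<subseteq> part x" using sub part_eq_if_mem[OF uV xu] by simp
    then show ?thesis using part_eq[OF xV] by blast
  qed
  show ?thesis unfolding t_sparse_def
  proof
    fix x assume "x \<in> Ws ! i"
    then show "card {y \<in> Ws ! i. E x y} \<le> t" by (subst no_edges) simp_all
  qed
next
  case False
  then show ?thesis using sparse_round(2)[OF assms] by blast
qed

lemma relaxed_coloring_run: "relaxed_coloring t V E (run_coloring Ws)"
  unfolding relaxed_coloring_def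
proof
  fix u assume "u \<in> V"
  then obtain i where i: "i < length Ws" "u \<in> Ws ! i" using in_some_class by blast
  have "{v \<in> V. E u v \<and> run_coloring Ws v = run_coloring Ws u} \<subseteq> {v \<in> Ws ! i. E u v}"
  proof
    fix v assume v: "v \<in> {v \<in> V. E u v \<and> run_coloring Ws v = run_coloring Ws u}"
    then obtain j where j: "j < length Ws" "v \<in> Ws ! j" using in_some_class by blast
    have "j = i" using run_coloring_eq[OF j] run_coloring_eq[OF i] v by simp
    then show "v \<in> {v \<in> Ws ! i. E u v}" using j v by simp
  qed
  then have "card {v \<in> V. E u v \<and> run_coloring Ws v = run_coloring Ws u} \<le> card {v \<in> Ws ! i. E u v}"
    using finite_class[OF i(1)] by (intro card_mono) auto
  also have "\<dots> \<le> t" using class_t_sparse[OF i(1)] i(2) unfolding t_sparse_def by blast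
  finally show "card {v \<in> V. E u v \<and> run_coloring Ws v = run_coloring Ws u} \<le> t" .
qed

text \<open>A round taking a part removes all of its uncoloured vertices, and a sparse round happens
  only when no part of size at least 2t is entirely uncoloured.\<close>
lemma big_part_colored_or_uncolored:
  assumes "i \<le> length Ws" and "u \<in> V" and "2 * t \<le> card (part u)"
  shows "part u \<inter> uncolored i = {} \<or> part u \<subseteq> uncolored i"
  using assms(1)
proof (induction i)
  case 0
  then show ?case using uncolored_0 part_subset by auto
next
  case (Suc i)
  then have i: "i < length Ws" by simp
  have IH: "part u \<inter> uncolored i = {} \<or> part u \<subseteq> uncolored i" using Suc by simp
  show ?case
  proof (cases "takes_part i")
    case True
    then obtain x where x: "x \<in> uncolored i" "Ws ! i = part x \<inter> uncolored i"
      using takes_part_round(1)[OF i] part_at_subset_eq[OF uncolored_subset] by blast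
    have "x \<in> V" using x(1) uncolored_subset by blast
    then have "part u = part x \<or> part u \<inter> part x = {}"
      using parts_eq_or_disjoint assms(2) by blast
    then show ?thesis using IH uncolored_Suc[OF i] x(2) by auto
  next
    case False
    have "\<not> part u \<subseteq> uncolored i"
    proof
      assume sub: "part u \<subseteq> uncolored i"
      then have "part_at (uncolored i) E u = part u"
        using part_at_subset_eq[OF uncolored_subset] by blast
      then have "part_of (uncolored i) E (part u)"
        using sub self_in_part[OF assms(2)] unfolding part_of_iff_part_at by blast
      then show False using False assms(3) unfolding takes_part_def by blast
    qed
    then show ?thesis using IH uncolored_Suc[OF i] by auto
  qed
qed

lemma takes_part_class:
  assumes "i < length Ws" and "takes_part i"
  shows "\<exists>u\<in>V. Ws ! i = part u \<and> 2 * t \<le> card (part u)"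
proof -
  obtain x where x: "x \<in> uncolored i" "Ws ! i = part x \<inter> uncolored i"
    using takes_part_round(1)[OF assms] part_at_subset_eq[OF uncolored_subset] by blast
  have xV: "x \<in> V" using x(1) uncolored_subset by blast
  obtain Q where "part_of (uncolored i) E Q" "2 * t \<le> card Q"
    using assms(2) unfolding takes_part_def by blast
  then have "2 * t \<le> card (Ws ! i)" using takes_part_round(2)[OF assms] by fastforce
  also have "\<dots> \<le> card (part x)" using x(2) finite_part by (simp add: card_mono)
  finally have big: "2 * t \<le> card (part x)" .
  have "part x \<subseteq> uncolored i"
    using big_part_colored_or_uncolored[of i x] assms(1) xV big x(1) self_in_part[OF xV] by auto
  then show ?thesis using xV x(2) big by blast
qed

lemma sum_weight_takes_part:
  assumes "i < length Ws" and "takes_part i"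
  shows "sum (weight t) (Ws ! i) = real (2 * t)"
proof -
  obtain u where "u \<in> V" "Ws ! i = part u" "2 * t \<le> card (part u)"
    using takes_part_class[OF assms] by blast
  then show ?thesis using sum_weight_big_part by simp
qed

lemma small_part_if_not_takes_part:
  assumes "i < length Ws" and "\<not> takes_part i" and "v \<in> uncolored i"
  shows "card (part v) < 2 * t"
proof (rule ccontr)
  assume "\<not> card (part v) < 2 * t"
  then have big: "2 * t \<le> card (part v)" by simp
  have vV: "v \<in> V" using assms(3) uncolored_subset by blast
  then have "part v \<subseteq> uncolored i"
    using big_part_colored_or_uncolored[of i v] assms big self_in_part by auto
  then have "part_at (uncolored i) E v = part v"
    using part_at_subset_eq[OF uncolored_subset] by blast
  then have "part_of (uncolored i) E (part v)"
    using assms(3) unfolding part_of_iff_part_at by blast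
  then show False using assms(2) big unfolding takes_part_def by blast
qed

lemma sum_weight_sparse_round:
  assumes "i < length Ws" and "\<not> takes_part i"
  shows "sum (weight t) (Ws ! i) = real (card (Ws ! i))"
proof -
  have "weight t v = 1" if "v \<in> Ws ! i" for v
  proof -
    have "v \<in> uncolored i" using that sparse_round(1)[OF assms] by blast
    then have "card (part v) < 2 * t" by (rule small_part_if_not_takes_part[OF assms])
    then show ?thesis using t_pos by (intro weight_small_part) simp_all
  qed
  then show ?thesis by simp
qed

text \<open>Any t + 1 uncoloured vertices form a t-sparse set, so only the last round can colour fewer.\<close>
lemma sparse_round_card:
  assumes "i < length Ws" and "\<not> takes_part i"
  shows "0 < card (Ws ! i)" and "Suc i < length Ws \<Longrightarrow> t + 1 \<le> card (Ws ! i)"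
proof -
  have fin: "finite (uncolored i)" using finite_V uncolored_subset by (rule finite_subset[rotated])
  obtain S where S: "S \<subseteq> uncolored i" "card S = min (t + 1) (card (uncolored i))"
    using obtain_subset_with_card_n[of "min (t + 1) (card (uncolored i))" "uncolored i"] by auto
  then have "t_sparse t E S"
    using fin uncolored_subset by (intro small_t_sparse) (auto intro: finite_subset)
  then have ge: "min (t + 1) (card (uncolored i)) \<le> card (Ws ! i)"
    using sparse_round(3)[OF assms] S by metis
  have "0 < card (uncolored i)" using round(1)[OF assms(1)] fin by auto
  then show "0 < card (Ws ! i)" using ge by linarith
  assume later: "Suc i < length Ws"
  show "t + 1 \<le> card (Ws ! i)"
  proof (rule ccontr)
    assume "\<not> t + 1 \<le> card (Ws ! i)"
    then have "card (uncolored i) \<le> card (Ws ! i)" using ge by linarith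
    then have "Ws ! i = uncolored i"
      using sparse_round(1)[OF assms] fin by (simp add: card_seteq)
    then show False using round(1)[OF later] uncolored_Suc[OF assms(1)] by simp
  qed
qed

lemma card_sparse_rounds:
  defines "R \<equiv> {i. i < length Ws \<and> \<not> takes_part i}"
  shows "(t + 1) * card R \<le> (\<Sum>i\<in>R. card (Ws ! i)) + t"
proof -
  have "t + 1 \<le> card (Ws ! i) + (if i = length Ws - 1 then t else 0)" if "i \<in> R" for i
  proof (cases "i = length Ws - 1")
    case True
    then show ?thesis using sparse_round_card(1) that unfolding R_def by fastforce
  next
    case False
    then have "Suc i < length Ws" using that unfolding R_def by auto
    then show ?thesis using sparse_round_card(2) that unfolding R_def by fastforce
  qed
  then have "(\<Sum>i\<in>R. t + 1) \<le> (\<Sum>i\<in>R. card (Ws ! i) + (if i = length Ws - 1 then t else 0))"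
    by (rule sum_mono)
  also have "\<dots> \<le> (\<Sum>i\<in>R. card (Ws ! i)) + t"
    unfolding sum.distrib by (simp add: R_def)
  finally show ?thesis by (simp add: algebra_simps)
qed

lemma sum_weight_V: "sum (weight t) V = (\<Sum>i<length Ws. sum (weight t) (Ws ! i))"
proof -
  have "Ws ! i \<inter> Ws ! j = {}" if "i < length Ws" "j < length Ws" "i \<noteq> j" for i j
    using that classes_disjoint[of i j] classes_disjoint[of j i] by (cases "i < j") auto
  then have "sum (weight t) (\<Union>i<length Ws. Ws ! i) = (\<Sum>i<length Ws. sum (weight t) (Ws ! i))"
    using finite_class by (intro sum.UNION_disjoint) auto
  then show ?thesis using V_eq_UN_classes by simp
qed

lemma length_le_twice_chi_t: "length Ws \<le> 2 * chi_t t V E"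
proof -
  define R1 where "R1 = {i. i < length Ws \<and> takes_part i}"
  define R2 where "R2 = {i. i < length Ws \<and> \<not> takes_part i}"
  define s where "s = (\<Sum>i\<in>R2. card (Ws ! i))"
  have fin: "finite R1" "finite R2" unfolding R1_def R2_def by auto
  have split: "{..<length Ws} = R1 \<union> R2" "R1 \<inter> R2 = {}" unfolding R1_def R2_def by auto
  have "sum (weight t) V = (\<Sum>i\<in>R1. sum (weight t) (Ws ! i)) + (\<Sum>i\<in>R2. sum (weight t) (Ws ! i))"
    unfolding sum_weight_V split(1) using fin split(2) by (rule sum.union_disjoint)
  also have "\<dots> = real (2 * t * card R1 + s)"
    using sum_weight_takes_part sum_weight_sparse_round unfolding R1_def R2_def s_def by simp
  finally have "real (2 * t * card R1 + s) \<le> real (2 * t * chi_t t V E)"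
    using sum_weight_le_chi_t[OF relaxed_coloring_run run_coloring_range] by simp
  then have "2 * t * card R1 + s \<le> 2 * t * chi_t t V E" by (simp only: of_nat_le_iff)
  moreover have "(t + 1) * card R2 \<le> s + t" unfolding R2_def s_def by (rule card_sparse_rounds)
  moreover have "length Ws = card R1 + card R2"
    using card_Un_disjoint[OF fin split(2)] split(1) by (metis card_lessThan)
  ultimately show ?thesis using rounds_count_arith[OF t_pos] by simp
qed

end

theorem mainTheorem6:
  fixes t :: nat and V :: "'a set" and E :: "'a \<Rightarrow> 'a \<Rightarrow> bool" and Ws :: "'a set list"
  assumes "t \<ge> 1"
    and "complete_multipartite V E"
    and "greedy_run t V E Ws"
  shows "relaxed_coloring t V E (run_coloring Ws)
         \<and> card (run_coloring Ws ` V) \<le> 2 * chi_t t V E"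
proof -
  interpret greedy_coloring_run V E t Ws
    using assms by unfold_locales
  have "card (run_coloring Ws ` V) \<le> length Ws"
    using card_mono[OF finite_lessThan run_coloring_range] by simp
  then show ?thesis using relaxed_coloring_run length_le_twice_chi_t by simp
qed

end
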